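(* Let $V,V'$ be finite-dimensional $\mathfrak l_m$-modules on which $E_x$ acts by scalars $c$ and $c'$ respectively. Then $\mathrm{Hom}_{\mathfrak b_m}(\mathcal F(V),\mathcal F(V'))=0$ unless $c'-c\in\mathbb N$, and if $c'-c\in\mathbb N$ it is isomorphic to the space of $\mathfrak l_m$-invariants $\bigl[\mathbb C[\partial_x]_{(c-c')}\otimes\mathrm{Hom}(V,V')\bigr]^{\mathfrak l_m}$, where $\mathbb C[\partial_x]_{(c-c')}$ denotes the homogeneous polynomials of degree $c'-c$ in $\partial_{x_1},\dots,\partial_{x_m}$.
   Context: $\mathrm{Vec}\,\mathbb R^m$ is the Lie algebra of complex polynomial vector fields on $\mathbb R^m$; $E_x=\sum_r x_r\partial_{x_r}$; $\mathfrak b_m=\mathrm{Span}\{\partial_{x_i},x_j\partial_{x_i}\}$, $\mathfrak l_m=\mathrm{Span}\{x_j\partial_{x_i}\}$. For a finite-dimensional $\mathfrak l_m$-representation $(\phi,V)$, $\mathcal F(V)=\mathbb C[x]\otimes V$ with $\mathrm{Lie}_\phi(X)h=\sum_jX_j\partial_{x_j}h+\sum_{i,j}(\partial_{x_i}X_j)\phi(x_i\partial_{x_j})h$. The algebra $\mathbb C[\partial_x]$ of constant-coefficient differential operators is an $\mathfrak l_m$-module via commutators, $\mathrm{Hom}(V,V')$ via $Y\cdot\tau=\phi'(Y)\tau-\tau\phi(Y)$, and their tensor product via the diagonal action. *)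

theory Defs
  imports Complex_Main
begin

(* Conventions.
   - The variables x_1..x_m are indexed by a finite type 'm.
   - A monomial x^alpha is an exponent vector alpha :: 'm => nat.
   - A (V-valued) polynomial, i.e. an element of C[x] (x) V, is a finitely
     supported function ('m => nat) => 'v (coefficient of x^alpha).
   - Finite-dimensional complex vector spaces are given by a scalar
     multiplication sc on a type 'v (locale finite_dimensional_vector_space). *)

definition deg :: "('m::finite \<Rightarrow> nat) \<Rightarrow> nat" where
  "deg \<alpha> = (\<Sum>k\<in>UNIV. \<alpha> k)"

definition polys :: "(('m::finite \<Rightarrow> nat) \<Rightarrow> 'a::zero) set" where
  "polys = {h. finite {\<alpha>. h \<alpha> \<noteq> 0}}"

definition pder :: "(complex \<Rightarrow> 'a \<Rightarrow> 'a) \<Rightarrow> 'm::finite \<Rightarrow>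
    (('m \<Rightarrow> nat) \<Rightarrow> 'a) \<Rightarrow> (('m \<Rightarrow> nat) \<Rightarrow> 'a)" where
  "pder sc j h = (\<lambda>\<alpha>. sc (of_nat (\<alpha> j + 1)) (h (\<alpha>(j := \<alpha> j + 1))))"

definition pmult :: "(complex \<Rightarrow> 'a::comm_monoid_add \<Rightarrow> 'a) \<Rightarrow> (('m::finite \<Rightarrow> nat) \<Rightarrow> complex) \<Rightarrow>
    (('m \<Rightarrow> nat) \<Rightarrow> 'a) \<Rightarrow> (('m \<Rightarrow> nat) \<Rightarrow> 'a)" where
  "pmult sc p h = (\<lambda>\<alpha>. \<Sum>\<beta>\<in>{\<beta>. \<beta> \<le> \<alpha>}. sc (p \<beta>) (h (\<lambda>k. \<alpha> k - \<beta> k)))"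

text \<open>Polynomial vector fields X = sum_j X_j d/dx_j are functions X :: 'm => C[x]
  (X j is the coefficient polynomial X_j).  b_m = Span{d/dx_i, x_j d/dx_i}
  consists exactly of the fields whose coefficients have degree at most 1.\<close>
definition bm :: "('m::finite \<Rightarrow> (('m \<Rightarrow> nat) \<Rightarrow> complex)) set" where
  "bm = {X. \<forall>j \<alpha>. X j \<alpha> \<noteq> 0 \<longrightarrow> deg \<alpha> \<le> 1}"

text \<open>An l_m-representation on V: phi a b is the operator phi(x_a d/dx_b).
  Since l_m has basis {x_a d/dx_b}, a representation is the same as a family of
  linear maps satisfying the bracket relations
  [x_a d_b, x_c d_d] = delta_bc x_a d_d - delta_da x_c d_b.\<close>
definition is_lm_rep :: "(complex \<Rightarrow> 'v::ab_group_add \<Rightarrow> 'v) \<Rightarrow> ('m \<Rightarrow> 'm \<Rightarrow> 'v \<Rightarrow> 'v) \<Rightarrow> bool" where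
  "is_lm_rep sc \<phi> \<longleftrightarrow>
     (\<forall>a b. Vector_Spaces.linear sc sc (\<phi> a b)) \<and>
     (\<forall>a b c d v. \<phi> a b (\<phi> c d v) - \<phi> c d (\<phi> a b v) =
        (if b = c then \<phi> a d v else 0) - (if d = a then \<phi> c b v else 0))"

text \<open>E_x = sum_r x_r d/dx_r acts by the scalar c.\<close>
definition Ex_acts_by :: "(complex \<Rightarrow> 'v::ab_group_add \<Rightarrow> 'v) \<Rightarrow> ('m::finite \<Rightarrow> 'm \<Rightarrow> 'v \<Rightarrow> 'v) \<Rightarrow> complex \<Rightarrow> bool" where
  "Ex_acts_by sc \<phi> c \<longleftrightarrow> (\<forall>v. (\<Sum>r\<in>UNIV. \<phi> r r v) = sc c v)"

definition Lie :: "(complex \<Rightarrow> 'v::ab_group_add \<Rightarrow> 'v) \<Rightarrow> ('m::finite \<Rightarrow> 'm \<Rightarrow> 'v \<Rightarrow> 'v) \<Rightarrow>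
    ('m \<Rightarrow> (('m \<Rightarrow> nat) \<Rightarrow> complex)) \<Rightarrow> (('m \<Rightarrow> nat) \<Rightarrow> 'v) \<Rightarrow> (('m \<Rightarrow> nat) \<Rightarrow> 'v)" where
  "Lie sc \<phi> X h = (\<lambda>\<alpha>.
     (\<Sum>j\<in>UNIV. pmult sc (X j) (pder sc j h) \<alpha>) +
     (\<Sum>i\<in>UNIV. \<Sum>j\<in>UNIV. pmult sc (pder (*) i (X j)) (\<lambda>\<beta>. \<phi> i j (h \<beta>)) \<alpha>))"

text \<open>Hom_{b_m}(F(V),F(V')): C-linear maps F(V) -> F(V') commuting with Lie(X), X in b_m.
  Maps are taken extensional (zero outside F(V)) so the set is exactly the hom space.\<close>
definition HomB :: "(complex \<Rightarrow> 'v::ab_group_add \<Rightarrow> 'v) \<Rightarrow> ('m::finite \<Rightarrow> 'm \<Rightarrow> 'v \<Rightarrow> 'v) \<Rightarrow>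
    (complex \<Rightarrow> 'w::ab_group_add \<Rightarrow> 'w) \<Rightarrow> ('m \<Rightarrow> 'm \<Rightarrow> 'w \<Rightarrow> 'w) \<Rightarrow>
    ((('m \<Rightarrow> nat) \<Rightarrow> 'v) \<Rightarrow> (('m \<Rightarrow> nat) \<Rightarrow> 'w)) set" where
  "HomB scV \<phi> scW \<psi> = {T.
     (\<forall>h\<in>polys. T h \<in> polys) \<and>
     (\<forall>h. h \<notin> polys \<longrightarrow> T h = (\<lambda>_. 0)) \<and>
     (\<forall>h\<in>polys. \<forall>g\<in>polys. T (\<lambda>\<alpha>. h \<alpha> + g \<alpha>) = (\<lambda>\<alpha>. T h \<alpha> + T g \<alpha>)) \<and>
     (\<forall>a. \<forall>h\<in>polys. T (\<lambda>\<alpha>. scV a (h \<alpha>)) = (\<lambda>\<alpha>. scW a (T h \<alpha>))) \<and>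
     (\<forall>X\<in>bm. \<forall>h\<in>polys. T (Lie scV \<phi> X h) = Lie scW \<psi> X (T h))}"

definition hom_add where "hom_add T S = (\<lambda>h \<alpha>. T h \<alpha> + S h \<alpha>)"
definition hom_scale where "hom_scale sc a T = (\<lambda>h \<alpha>. sc a (T h \<alpha>))"

text \<open>The l_m-module C[d_x] (action by commutators): for Y = x_j d_i,
  [x_j d_i, d^gamma] = - gamma_j d^(gamma - e_j + e_i).  dact j i gamma delta is the
  coefficient of d^delta in (x_j d_i) . d^gamma.\<close>
definition dact :: "'m \<Rightarrow> 'm \<Rightarrow> ('m \<Rightarrow> nat) \<Rightarrow> ('m \<Rightarrow> nat) \<Rightarrow> complex" where
  "dact j i \<gamma> \<delta> =
     (if 1 \<le> \<gamma> j \<and> \<delta> = (\<gamma>(j := \<gamma> j - 1))(i := (\<gamma>(j := \<gamma> j - 1)) i + 1)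
      then - of_nat (\<gamma> j) else 0)"

text \<open>C[d_x]_(n) (x) Hom(V,V'): elements sum_{deg gamma = n} d^gamma (x) tau_gamma,
  represented by the coefficient family tau.  The l_m-invariants are those
  annihilated by every basis element x_j d_i of l_m under the diagonal action
  Y.(D (x) tau) = (Y.D) (x) tau + D (x) (phi'(Y) tau - tau phi(Y)).\<close>
definition InvT :: "(complex \<Rightarrow> 'v::ab_group_add \<Rightarrow> 'v) \<Rightarrow> ('m::finite \<Rightarrow> 'm \<Rightarrow> 'v \<Rightarrow> 'v) \<Rightarrow>
    (complex \<Rightarrow> 'w::ab_group_add \<Rightarrow> 'w) \<Rightarrow> ('m \<Rightarrow> 'm \<Rightarrow> 'w \<Rightarrow> 'w) \<Rightarrow> nat \<Rightarrow>
    (('m \<Rightarrow> nat) \<Rightarrow> 'v \<Rightarrow> 'w) set" where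
  "InvT scV \<phi> scW \<psi> n = {\<tau>.
     (\<forall>\<gamma>. Vector_Spaces.linear scV scW (\<tau> \<gamma>)) \<and>
     (\<forall>\<gamma>. deg \<gamma> \<noteq> n \<longrightarrow> \<tau> \<gamma> = (\<lambda>_. 0)) \<and>
     (\<forall>j i \<delta> v.
        (\<Sum>\<gamma>\<in>{\<gamma>. deg \<gamma> = n}. scW (dact j i \<gamma> \<delta>) (\<tau> \<gamma> v))
        + \<psi> j i (\<tau> \<delta> v) - \<tau> \<delta> (\<phi> j i v) = 0)}"

definition tau_add where "tau_add \<tau> \<sigma> = (\<lambda>\<gamma> v. \<tau> \<gamma> v + \<sigma> \<gamma> v)"
definition tau_scale where "tau_scale sc a \<tau> = (\<lambda>\<gamma> v. sc a (\<tau> \<gamma> v))"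

end

theory Submission
  imports Defs "HOL-Library.FuncSet"
begin

text \<open>A \<open>b\<^sub>m\<close>-homomorphism \<open>T : F(V) \<rightarrow> F(V')\<close> commutes with every \<open>\<partial>\<^sub>k\<close>, so it is
  determined by the constant terms \<open>(T h)(0)\<close>.  It also commutes with \<open>E\<^sub>x\<close>, which acts on
  \<open>x\<^sup>\<gamma> \<otimes> V\<close> by \<open>|\<gamma>| + c\<close> and on the constants of \<open>F(V')\<close> by \<open>c'\<close>; hence only monomials
  of degree \<open>n = c' - c\<close> contribute, and \<open>T\<close> is the constant-coefficient operator
  \<open>\<Sum>\<^sub>|\<^sub>\<gamma>\<^sub>|\<^sub>=\<^sub>n \<tau>\<^sub>\<gamma> \<partial>\<^sup>\<gamma>\<close> with \<open>\<tau>\<^sub>\<gamma> v = T(x\<^sup>\<gamma> v / \<gamma>!)(0)\<close>.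
  Conversely such an operator commutes with all \<open>\<partial>\<^sub>k\<close>, so it commutes with a field \<open>x\<^sub>i \<partial>\<^sub>j\<close>
  as soon as it does so at the origin, and at the origin this is exactly the
  \<open>l\<^sub>m\<close>-invariance of \<open>\<tau>\<close>.\<close>

lemma linear_simps:
  assumes "Vector_Spaces.linear s1 s2 f"
  shows "f (x + y) = f x + f y" "f (s1 a x) = s2 a (f x)" "f 0 = 0"
    "f (sum g S) = (\<Sum>a\<in>S. f (g a))" "f (x - y) = f x - f y"
proof -
  interpret Vector_Spaces.linear s1 s2 f by fact
  show "f (x + y) = f x + f y" by (rule add)
  show "f (s1 a x) = s2 a (f x)" by (rule scale)
  show "f 0 = 0" by (rule zero)
  show "f (sum g S) = (\<Sum>a\<in>S. f (g a))" by (rule sum)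
  show "f (x - y) = f x - f y" by (rule diff)
qed

section \<open>Exponent vectors and factorial coefficients\<close>

definition unit_exp :: "'m \<Rightarrow> 'm \<Rightarrow> nat" where
  "unit_exp i = (\<lambda>_. 0)(i := 1)"

lemma deg_remove: "deg (\<beta>::'m::finite \<Rightarrow> nat) = \<beta> i + (\<Sum>k\<in>UNIV-{i}. \<beta> k)"
  by (simp add: deg_def sum.remove)

lemma deg_fun_upd: "deg ((\<beta>::'m::finite \<Rightarrow> nat)(i := x)) + \<beta> i = deg \<beta> + x"
proof -
  have "(\<Sum>k\<in>UNIV-{i}. (\<beta>(i := x)) k) = (\<Sum>k\<in>UNIV-{i}. \<beta> k)"
    by (rule sum.cong) auto
  then show ?thesis using deg_remove[of "\<beta>(i:=x)" i] deg_remove[of \<beta> i] by simp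
qed

lemma deg_fun_upd_Suc: "deg ((\<beta>::'m::finite \<Rightarrow> nat)(i := \<beta> i + 1)) = deg \<beta> + 1"
  using deg_fun_upd[of \<beta> i "\<beta> i + 1"] by simp

lemma deg_zero [simp]: "deg (\<lambda>_::'m::finite. 0::nat) = 0"
  by (simp add: deg_def)

lemma deg_unit_exp [simp]: "deg (unit_exp (i::'m::finite)) = 1"
  using deg_fun_upd_Suc[of "\<lambda>_. 0" i] by (simp add: unit_exp_def)

lemma unit_exp_neq_zero [simp]: "unit_exp i \<noteq> (\<lambda>_. 0)" "(\<lambda>_. 0) \<noteq> unit_exp i"
  by (auto simp: unit_exp_def fun_eq_iff)

lemma unit_exp_eq_iff [simp]: "unit_exp i = unit_exp j \<longleftrightarrow> i = j"
  by (auto simp: unit_exp_def fun_eq_iff split: if_splits)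

lemma inj_unit_exp: "inj unit_exp"
  by (simp add: inj_def)

lemma deg_le_1_cases:
  assumes "deg (\<beta>::'m::finite \<Rightarrow> nat) \<le> 1"
  shows "\<beta> = (\<lambda>_. 0) \<or> (\<exists>i. \<beta> = unit_exp i)"
proof (cases "\<beta> = (\<lambda>_. 0)")
  case False
  then obtain i where i: "\<beta> i \<noteq> 0" by auto
  have d: "\<beta> i + (\<Sum>k\<in>UNIV-{i}. \<beta> k) \<le> 1" using assms deg_remove[of \<beta> i] by simp
  then have b1: "\<beta> i = 1" using i by linarith
  have "(\<Sum>k\<in>UNIV-{i}. \<beta> k) = 0" using d b1 by linarith
  then have "\<beta> = unit_exp i" using b1 by (auto simp: unit_exp_def fun_eq_iff)
  then show ?thesis by blast
qed simp

lemma finite_bounded_exps: "finite {f::'m::finite \<Rightarrow> nat. \<forall>k. f k \<le> N k}"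
proof -
  have "{f::'m \<Rightarrow> nat. \<forall>k. f k \<le> N k} = PiE UNIV (\<lambda>k. {..N k})"
    by (auto simp: PiE_def Pi_def)
  then show ?thesis by (simp add: finite_PiE)
qed

lemma finite_exps_le: "finite {\<beta>::'m::finite \<Rightarrow> nat. \<beta> \<le> \<alpha>}"
  by (rule finite_subset[OF _ finite_bounded_exps[of \<alpha>]]) (auto simp: le_fun_def)

lemma finite_exps_of_deg: "finite {\<gamma>::'m::finite \<Rightarrow> nat. deg \<gamma> = n}"
proof -
  have "\<gamma> k \<le> n" if "deg \<gamma> = n" for \<gamma> :: "'m \<Rightarrow> nat" and k
    using that deg_remove[of \<gamma> k] by simp
  then show ?thesis
    by (intro finite_subset[OF _ finite_bounded_exps[of "\<lambda>_. n"]]) auto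
qed

definition exp_move :: "'m \<Rightarrow> 'm \<Rightarrow> ('m \<Rightarrow> nat) \<Rightarrow> ('m \<Rightarrow> nat)" where
  "exp_move i j \<gamma> = (\<gamma>(i := \<gamma> i - 1))(j := (\<gamma>(i := \<gamma> i - 1)) j + 1)"

lemma deg_exp_move:
  assumes "1 \<le> (\<gamma>::'m::finite \<Rightarrow> nat) i"
  shows "deg (exp_move i j \<gamma>) = deg \<gamma>"
proof -
  have "deg (\<gamma>(i := \<gamma> i - 1)) + \<gamma> i = deg \<gamma> + (\<gamma> i - 1)" by (rule deg_fun_upd)
  then have "deg (\<gamma>(i := \<gamma> i - 1)) + 1 = deg \<gamma>" using assms by simp
  then show ?thesis unfolding exp_move_def using deg_fun_upd_Suc[of "\<gamma>(i := \<gamma> i - 1)" j] by simp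
qed

lemma dact_eq_exp_move:
  "dact i j \<gamma> \<delta> = (if 1 \<le> \<gamma> i \<and> \<delta> = exp_move i j \<gamma> then - of_nat (\<gamma> i) else 0)"
  by (simp add: dact_def exp_move_def)

lemma fact_ratio_Suc:
  "of_nat (fact (b + g)) / of_nat (fact b) * of_nat (b + g + 1) =
   of_nat (b + 1) * (of_nat (fact (b + 1 + g)) / (of_nat (fact (b + 1)) :: complex))"
proof -
  have f1: "(fact (b + 1 + g) :: complex) = of_nat (b + g + 1) * fact (b + g)"
    using fact_Suc[of "b + g"] by (simp add: add.commute add.left_commute)
  have f2: "(fact (b + 1) :: complex) = of_nat (b + 1) * fact b" by simp
  have "B \<noteq> 0 \<Longrightarrow> F / fb * N = B * (N * F / (B * fb))" for B F fb N :: complex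
    by (cases "fb = 0") (simp_all add: field_simps)
  moreover have "(of_nat (b + 1) :: complex) \<noteq> 0" by (simp only: of_nat_eq_0_iff)
  ultimately show ?thesis unfolding of_nat_fact f1 f2 by blast
qed

text \<open>\<open>shift_coeff \<beta> \<gamma>\<close> is the coefficient of \<open>x^\<beta>\<close> in \<open>\<partial>^\<gamma> (x^(\<beta>+\<gamma>))\<close>.\<close>

definition shift_coeff :: "('m::finite \<Rightarrow> nat) \<Rightarrow> ('m \<Rightarrow> nat) \<Rightarrow> complex" where
  "shift_coeff \<beta> \<gamma> = (\<Prod>k\<in>UNIV. of_nat (fact (\<beta> k + \<gamma> k)) / of_nat (fact (\<beta> k)))"

definition mfact :: "('m::finite \<Rightarrow> nat) \<Rightarrow> complex" where
  "mfact \<gamma> = (\<Prod>k\<in>UNIV. of_nat (fact (\<gamma> k)))"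

lemma shift_coeff_zero [simp]: "shift_coeff (\<lambda>_. 0) \<gamma> = mfact \<gamma>"
  by (simp add: shift_coeff_def mfact_def)

lemma mfact_nonzero: "mfact \<gamma> \<noteq> 0"
  by (simp add: mfact_def)

lemma shift_coeff_Suc:
  "shift_coeff \<beta> \<gamma> * of_nat (\<beta> k + \<gamma> k + 1) = of_nat (\<beta> k + 1) * shift_coeff (\<beta>(k := \<beta> k + 1)) \<gamma>"
proof -
  define R where "R = (\<Prod>k'\<in>UNIV-{k}. of_nat (fact (\<beta> k' + \<gamma> k')) / (of_nat (fact (\<beta> k')) :: complex))"
  have R': "(\<Prod>k'\<in>UNIV-{k}. of_nat (fact ((\<beta>(k := \<beta> k + 1)) k' + \<gamma> k')) / of_nat (fact ((\<beta>(k := \<beta> k + 1)) k'))) = R"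
    unfolding R_def by (rule prod.cong) auto
  have c1: "shift_coeff \<beta> \<gamma> = of_nat (fact (\<beta> k + \<gamma> k)) / of_nat (fact (\<beta> k)) * R"
    unfolding shift_coeff_def R_def by (rule prod.remove) auto
  have c2: "shift_coeff (\<beta>(k := \<beta> k + 1)) \<gamma> = of_nat (fact (\<beta> k + 1 + \<gamma> k)) / of_nat (fact (\<beta> k + 1)) * R"
    unfolding shift_coeff_def R'[symmetric] by (subst prod.remove[of _ k]) auto
  show ?thesis
    unfolding c1 c2 mult.assoc[symmetric] fact_ratio_Suc[symmetric] by (simp only: ac_simps)
qed

lemma mfact_fun_upd_Suc: "mfact (g(j := g j + 1)) = of_nat (g j + 1) * mfact g"
proof -
  have "(\<Prod>k\<in>UNIV-{j}. (of_nat (fact ((g(j := g j + 1)) k)) :: complex)) = (\<Prod>k\<in>UNIV-{j}. of_nat (fact (g k)))"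
    by (rule prod.cong) auto
  then show ?thesis
    by (simp add: mfact_def prod.remove[of UNIV j] algebra_simps)
qed

lemma mfact_exp_move:
  assumes "1 \<le> \<gamma> i"
  shows "mfact \<gamma> * of_nat ((\<gamma>(i := \<gamma> i - 1)) j + 1) = of_nat (\<gamma> i) * mfact (exp_move i j \<gamma>)"
proof -
  define g where "g = \<gamma>(i := \<gamma> i - 1)"
  have "\<gamma> = g(i := g i + 1)" using assms by (auto simp: g_def fun_eq_iff)
  then have "mfact \<gamma> = of_nat (\<gamma> i) * mfact g"
    using mfact_fun_upd_Suc[of g i] assms by (simp add: g_def)
  moreover have "mfact (exp_move i j \<gamma>) = of_nat (g j + 1) * mfact g"
    using mfact_fun_upd_Suc[of g j] by (simp add: exp_move_def g_def)
  ultimately show ?thesis by (simp add: g_def)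
qed

section \<open>Polynomials and polynomial vector fields\<close>

definition monom :: "('m \<Rightarrow> nat) \<Rightarrow> 'a::zero \<Rightarrow> (('m \<Rightarrow> nat) \<Rightarrow> 'a)" where
  "monom \<gamma> v = (\<lambda>\<alpha>. if \<alpha> = \<gamma> then v else 0)"

definition mult_x :: "'m \<Rightarrow> (('m \<Rightarrow> nat) \<Rightarrow> 'a::zero) \<Rightarrow> (('m \<Rightarrow> nat) \<Rightarrow> 'a)" where
  "mult_x i g = (\<lambda>\<alpha>. if 1 \<le> \<alpha> i then g (\<alpha>(i := \<alpha> i - 1)) else 0)"

definition x_pder :: "(complex \<Rightarrow> 'a::zero \<Rightarrow> 'a) \<Rightarrow> 'm::finite \<Rightarrow> 'm \<Rightarrow>
    (('m \<Rightarrow> nat) \<Rightarrow> 'a) \<Rightarrow> (('m \<Rightarrow> nat) \<Rightarrow> 'a)" where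
  "x_pder sc i j h = mult_x i (pder sc j h)"

lemma monom_add: "monom \<gamma> (x + y) = (\<lambda>\<alpha>. monom \<gamma> x \<alpha> + monom \<gamma> (y::'a::comm_monoid_add) \<alpha>)"
  by (simp add: monom_def fun_eq_iff)

lemma x_pder_at_0: "x_pder sc i j g (\<lambda>_. 0) = 0"
  by (simp add: x_pder_def mult_x_def)

lemma polys_iff: "h \<in> polys \<longleftrightarrow> finite {\<alpha>. h \<alpha> \<noteq> 0}"
  by (simp add: polys_def)

lemma polys_zero [simp]: "(\<lambda>_. 0) \<in> polys"
  by (simp add: polys_def)

lemma polys_monom [simp]: "monom \<gamma> v \<in> polys"
  unfolding polys_iff by (rule finite_subset[of _ "{\<gamma>}"]) (auto simp: monom_def)

lemma polys_add:
  fixes f :: "_ \<Rightarrow> 'a::comm_monoid_add"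
  shows "f \<in> polys \<Longrightarrow> g \<in> polys \<Longrightarrow> (\<lambda>\<alpha>. f \<alpha> + g \<alpha>) \<in> polys"
  unfolding polys_iff by (rule finite_subset[of _ "{\<alpha>. f \<alpha> \<noteq> 0} \<union> {\<alpha>. g \<alpha> \<noteq> 0}"]) auto

lemma polys_map: "f \<in> polys \<Longrightarrow> F 0 = 0 \<Longrightarrow> (\<lambda>\<alpha>. F (f \<alpha>)) \<in> polys"
  unfolding polys_iff by (rule finite_subset[of _ "{\<alpha>. f \<alpha> \<noteq> 0}"]) auto

lemma polys_sum:
  fixes F :: "_ \<Rightarrow> _ \<Rightarrow> 'a::comm_monoid_add"
  shows "finite A \<Longrightarrow> (\<And>x. x \<in> A \<Longrightarrow> F x \<in> polys) \<Longrightarrow> (\<lambda>\<alpha>. \<Sum>x\<in>A. F x \<alpha>) \<in> polys"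
  by (induction A rule: finite_induct) (simp_all add: polys_add)

lemma polys_mult_x:
  assumes "g \<in> polys"
  shows "mult_x i g \<in> polys"
proof -
  have "{\<alpha>. mult_x i g \<alpha> \<noteq> 0} \<subseteq> (\<lambda>\<beta>. \<beta>(i := \<beta> i + 1)) ` {\<beta>. g \<beta> \<noteq> 0}"
  proof
    fix \<alpha> assume "\<alpha> \<in> {\<alpha>. mult_x i g \<alpha> \<noteq> 0}"
    then have "1 \<le> \<alpha> i" "g (\<alpha>(i := \<alpha> i - 1)) \<noteq> 0"
      by (auto simp: mult_x_def split: if_splits)
    then show "\<alpha> \<in> (\<lambda>\<beta>. \<beta>(i := \<beta> i + 1)) ` {\<beta>. g \<beta> \<noteq> 0}"
      by (intro image_eqI[of _ _ "\<alpha>(i := \<alpha> i - 1)"]) (auto simp: fun_eq_iff)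
  qed
  then show ?thesis
    using assms unfolding polys_iff by (rule finite_subset[OF _ finite_imageI])
qed

definition vf_d :: "'m \<Rightarrow> 'm \<Rightarrow> ('m \<Rightarrow> nat) \<Rightarrow> complex" where
  "vf_d k = (\<lambda>j \<beta>. if j = k \<and> \<beta> = (\<lambda>_. 0) then 1 else 0)"

definition vf_xd :: "'m \<Rightarrow> 'm \<Rightarrow> 'm \<Rightarrow> ('m \<Rightarrow> nat) \<Rightarrow> complex" where
  "vf_xd i j = (\<lambda>j' \<beta>. if j' = j \<and> \<beta> = unit_exp i then 1 else 0)"

definition vf_euler :: "'m \<Rightarrow> ('m \<Rightarrow> nat) \<Rightarrow> complex" where
  "vf_euler = (\<lambda>j \<beta>. if \<beta> = unit_exp j then 1 else 0)"

lemma vf_d_in_bm: "vf_d (k::'m::finite) \<in> bm"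
  by (auto simp: bm_def vf_d_def)

lemma vf_xd_in_bm: "vf_xd i (j::'m::finite) \<in> bm"
  by (auto simp: bm_def vf_xd_def)

lemma vf_euler_in_bm: "(vf_euler::'m::finite \<Rightarrow> _) \<in> bm"
  by (auto simp: bm_def vf_euler_def)

locale cvector_space =
  fixes sc :: "complex \<Rightarrow> 'v::ab_group_add \<Rightarrow> 'v"
  assumes vs: "vector_space sc"
begin

sublocale vector_space sc by (rule vs)

lemma polys_pder:
  fixes h :: "('m::finite \<Rightarrow> nat) \<Rightarrow> 'v"
  assumes "h \<in> polys"
  shows "pder sc j h \<in> polys"
proof -
  have "inj (\<lambda>\<alpha>::'m \<Rightarrow> nat. \<alpha>(j := \<alpha> j + 1))"
  proof (rule injI)
    fix a b :: "'m \<Rightarrow> nat" assume "a(j := a j + 1) = b(j := b j + 1)"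
    then show "a = b" by (metis fun_upd_apply add_right_cancel ext)
  qed
  then have "finite ((\<lambda>\<alpha>. \<alpha>(j := \<alpha> j + 1)) -` {\<alpha>. h \<alpha> \<noteq> 0})"
    using assms unfolding polys_iff by (rule finite_vimageI[rotated])
  then show ?thesis
    unfolding polys_iff by (rule finite_subset[rotated]) (auto simp: pder_def)
qed

lemma polys_x_pder: "h \<in> polys \<Longrightarrow> x_pder sc i j h \<in> polys"
  by (simp add: x_pder_def polys_mult_x polys_pder)

lemma polys_scale: "f \<in> polys \<Longrightarrow> (\<lambda>\<alpha>. sc a (f \<alpha>)) \<in> polys"
  by (rule polys_map) auto

lemma monom_scale: "monom \<gamma> (sc a x) = (\<lambda>\<alpha>. sc a (monom \<gamma> x \<alpha>))"
  by (simp add: monom_def fun_eq_iff)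

lemma pder_add: "pder sc k (\<lambda>\<alpha>. f \<alpha> + g \<alpha>) = (\<lambda>\<alpha>. pder sc k f \<alpha> + pder sc k g \<alpha>)"
  by (simp add: pder_def scale_right_distrib)

lemma pder_diff: "pder sc k (\<lambda>\<alpha>. f \<alpha> - g \<alpha>) = (\<lambda>\<alpha>. pder sc k f \<alpha> - pder sc k g \<alpha>)"
  by (simp add: pder_def scale_right_diff_distrib)

lemma pder_zero: "pder sc k (\<lambda>_. 0) = (\<lambda>_. 0)"
  by (simp add: pder_def)

lemma pder_commute: "pder sc k (pder sc j g) = pder sc j (pder sc k g)"
  by (cases "k = j") (auto simp: pder_def fun_eq_iff fun_upd_twist mult.commute)

lemma pder_mult_x:
  "pder sc k (mult_x i g) = (\<lambda>\<alpha>. mult_x i (pder sc k g) \<alpha> + (if k = i then g \<alpha> else 0))"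
proof (cases "k = i")
  case True
  show ?thesis
  proof
    fix \<alpha>
    show "pder sc k (mult_x i g) \<alpha> = mult_x i (pder sc k g) \<alpha> + (if k = i then g \<alpha> else 0)"
    proof (cases "1 \<le> \<alpha> i")
      case True
      then have "(\<alpha>(i := \<alpha> i - 1))(i := \<alpha> i - 1 + 1) = \<alpha>" by (auto simp: fun_eq_iff)
      then show ?thesis using True \<open>k = i\<close>
        by (simp add: pder_def mult_x_def scale_left_distrib[symmetric] algebra_simps)
    next
      case False
      then have "\<alpha> i = 0" by simp
      then show ?thesis using \<open>k = i\<close> by (simp add: pder_def mult_x_def)
    qed
  qed
qed (auto simp: pder_def mult_x_def fun_eq_iff fun_upd_twist)

lemma pder_x_pder:
  "pder sc k (x_pder sc i j h) = (\<lambda>\<alpha>. x_pder sc i j (pder sc k h) \<alpha> + (if k = i then pder sc j h \<alpha> else 0))"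
  by (simp add: x_pder_def pder_mult_x pder_commute)

lemma pder_linear_image:
  assumes "Vector_Spaces.linear sc2 sc f"
  shows "pder sc k (\<lambda>\<alpha>. f (h \<alpha>)) = (\<lambda>\<alpha>. f (pder sc2 k h \<alpha>))"
  by (simp add: pder_def linear_simps(2)[OF assms])

lemma pmult_deg_le_1:
  assumes "\<forall>\<beta>. p \<beta> \<noteq> 0 \<longrightarrow> deg \<beta> \<le> 1"
  shows "pmult sc p g \<alpha> = sc (p (\<lambda>_. 0)) (g \<alpha>) +
    (\<Sum>i\<in>UNIV. if 1 \<le> \<alpha> i then sc (p (unit_exp i)) (g (\<alpha>(i := \<alpha> i - 1))) else 0)"
proof -
  define F where "F \<beta> = sc (p \<beta>) (g (\<lambda>k. \<alpha> k - \<beta> k))" for \<beta>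
  define A where "A = insert (\<lambda>_. 0) (unit_exp ` {i. 1 \<le> \<alpha> i})"
  have "A \<subseteq> {\<beta>. \<beta> \<le> \<alpha>}"
    by (auto simp: A_def le_fun_def unit_exp_def)
  moreover have "F \<beta> = 0" if "\<beta> \<le> \<alpha>" "\<beta> \<notin> A" for \<beta>
  proof -
    have "\<beta> \<in> A" if "\<beta> = unit_exp i" for i
    proof -
      have "1 \<le> \<alpha> i" using \<open>\<beta> \<le> \<alpha>\<close> that by (auto simp: le_fun_def unit_exp_def dest: spec[of _ i])
      then show ?thesis using that by (simp add: A_def)
    qed
    moreover have "(\<lambda>_. 0) \<in> A" by (simp add: A_def)
    ultimately have "\<not> (\<beta> = (\<lambda>_. 0) \<or> (\<exists>i. \<beta> = unit_exp i))" using that(2) by blast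
    then have "p \<beta> = 0" using assms deg_le_1_cases by blast
    then show ?thesis by (simp add: F_def)
  qed
  ultimately have "pmult sc p g \<alpha> = sum F A"
    unfolding pmult_def F_def[symmetric] by (intro sum.mono_neutral_right finite_exps_le) auto
  also have "\<dots> = F (\<lambda>_. 0) + (\<Sum>i\<in>{i. 1 \<le> \<alpha> i}. F (unit_exp i))"
    unfolding A_def by (subst sum.insert) (auto simp: sum.reindex[OF inj_on_subset[OF inj_unit_exp]])
  also have "(\<Sum>i\<in>{i. 1 \<le> \<alpha> i}. F (unit_exp i)) =
      (\<Sum>i\<in>UNIV. if 1 \<le> \<alpha> i then sc (p (unit_exp i)) (g (\<alpha>(i := \<alpha> i - 1))) else 0)"
  proof -
    have "(\<lambda>k. \<alpha> k - unit_exp i k) = \<alpha>(i := \<alpha> i - 1)" for i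
      by (auto simp: unit_exp_def fun_eq_iff)
    then show ?thesis by (simp add: sum.If_cases F_def)
  qed
  finally show ?thesis by (simp add: F_def)
qed

lemma pmult_pder_deg_le_1:
  assumes "\<forall>\<beta>. p \<beta> \<noteq> 0 \<longrightarrow> deg \<beta> \<le> 1"
  shows "pmult sc (pder (*) i p) g \<alpha> = sc (p (unit_exp i)) (g \<alpha>)"
proof -
  have "pder (*) i p \<beta> = (if \<beta> = (\<lambda>_. 0) then p (unit_exp i) else 0)" for \<beta>
  proof (cases "\<beta> = (\<lambda>_. 0)")
    case False
    then have "deg \<beta> \<noteq> 0" by (auto simp: deg_def)
    then have "p (\<beta>(i := \<beta> i + 1)) = 0" using assms deg_fun_upd_Suc[of \<beta> i] by force
    then show ?thesis using False by (simp add: pder_def)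
  qed (simp add: pder_def unit_exp_def)
  then have "pmult sc (pder (*) i p) g \<alpha> =
      (\<Sum>\<beta>\<in>{\<beta>. \<beta> \<le> \<alpha>}. if \<beta> = (\<lambda>_. 0) then sc (p (unit_exp i)) (g \<alpha>) else 0)"
    unfolding pmult_def by (intro sum.cong) auto
  also have "\<dots> = sc (p (unit_exp i)) (g \<alpha>)"
    by (subst sum.delta[OF finite_exps_le]) (simp add: le_fun_def)
  finally show ?thesis .
qed

lemma scale_if_1_0: "sc (if P then 1 else 0) x = (if P then x else 0)"
  by simp

lemma Lie_bm_expand:
  assumes "X \<in> bm"
  shows "Lie sc \<phi> X h = (\<lambda>\<alpha>. (\<Sum>j\<in>UNIV. sc (X j (\<lambda>_. 0)) (pder sc j h \<alpha>)) +
     (\<Sum>i\<in>UNIV. \<Sum>j\<in>UNIV. sc (X j (unit_exp i)) (x_pder sc i j h \<alpha> + \<phi> i j (h \<alpha>))))"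
proof
  fix \<alpha> :: "'a \<Rightarrow> nat"
  have X: "\<forall>\<beta>. X j \<beta> \<noteq> 0 \<longrightarrow> deg \<beta> \<le> 1" for j
    using assms by (auto simp: bm_def)
  have pmult_X: "pmult sc (X j) (pder sc j h) \<alpha> = sc (X j (\<lambda>_. 0)) (pder sc j h \<alpha>) +
      (\<Sum>i\<in>UNIV. sc (X j (unit_exp i)) (x_pder sc i j h \<alpha>))" for j
    by (simp add: pmult_deg_le_1[OF X] x_pder_def mult_x_def if_distrib cong: if_cong)
  have "Lie sc \<phi> X h \<alpha> = (\<Sum>j\<in>UNIV. sc (X j (\<lambda>_. 0)) (pder sc j h \<alpha>) +
      (\<Sum>i\<in>UNIV. sc (X j (unit_exp i)) (x_pder sc i j h \<alpha>))) +
      (\<Sum>i\<in>UNIV. \<Sum>j\<in>UNIV. sc (X j (unit_exp i)) (\<phi> i j (h \<alpha>)))"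
    by (simp only: Lie_def pmult_X pmult_pder_deg_le_1[OF X])
  also have "\<dots> = (\<Sum>j\<in>UNIV. sc (X j (\<lambda>_. 0)) (pder sc j h \<alpha>)) +
      ((\<Sum>i\<in>UNIV. \<Sum>j\<in>UNIV. sc (X j (unit_exp i)) (x_pder sc i j h \<alpha>)) +
      (\<Sum>i\<in>UNIV. \<Sum>j\<in>UNIV. sc (X j (unit_exp i)) (\<phi> i j (h \<alpha>))))"
    using sum.swap[of "\<lambda>j i. sc (X j (unit_exp i)) (x_pder sc i j h \<alpha>)" UNIV UNIV]
    by (simp only: sum.distrib add.assoc)
  also have "\<dots> = (\<Sum>j\<in>UNIV. sc (X j (\<lambda>_. 0)) (pder sc j h \<alpha>)) +
     (\<Sum>i\<in>UNIV. \<Sum>j\<in>UNIV. sc (X j (unit_exp i)) (x_pder sc i j h \<alpha> + \<phi> i j (h \<alpha>)))"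
    by (simp only: sum.distrib[symmetric] scale_right_distrib)
  finally show "Lie sc \<phi> X h \<alpha> = \<dots>" .
qed

lemma polys_Lie:
  assumes "X \<in> bm" and "h \<in> polys" and "\<And>i j. \<phi> i j 0 = 0"
  shows "Lie sc \<phi> X h \<in> polys"
  unfolding Lie_bm_expand[OF assms(1)]
  by (intro polys_add polys_sum polys_scale polys_pder polys_x_pder polys_map[OF assms(2)]
      finite_UNIV assms(2,3))

lemma Lie_vf_d: "Lie sc \<phi> (vf_d k) h = pder sc k h"
  unfolding Lie_bm_expand[OF vf_d_in_bm] by (simp add: vf_d_def scale_if_1_0)

lemma Lie_vf_xd: "Lie sc \<phi> (vf_xd i j) h = (\<lambda>\<alpha>. x_pder sc i j h \<alpha> + \<phi> i j (h \<alpha>))"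
proof -
  have "sc (vf_xd i j j' (unit_exp i')) x = (if j' = j then if i' = i then x else 0 else 0)" for i' j' x
    by (auto simp: vf_xd_def)
  then show ?thesis
    unfolding Lie_bm_expand[OF vf_xd_in_bm] by (simp add: vf_xd_def)
qed

lemma pder_Lie_vf_xd:
  assumes "Vector_Spaces.linear sc sc (\<phi> i j)"
  shows "pder sc k (Lie sc \<phi> (vf_xd i j) h) =
    (\<lambda>\<alpha>. Lie sc \<phi> (vf_xd i j) (pder sc k h) \<alpha> + (if k = i then pder sc j h \<alpha> else 0))"
  by (simp add: Lie_vf_xd pder_add pder_x_pder pder_linear_image[OF assms] add_ac)

lemma Lie_vf_euler:
  assumes "Ex_acts_by sc \<phi> c"
  shows "Lie sc \<phi> vf_euler h = (\<lambda>\<alpha>. sc (of_nat (deg \<alpha>) + c) (h \<alpha>))"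
proof
  fix \<alpha>
  have x_pder_diag: "x_pder sc i i h \<alpha> = sc (of_nat (\<alpha> i)) (h \<alpha>)" for i
  proof (cases "1 \<le> \<alpha> i")
    case True
    then have "(\<alpha>(i := \<alpha> i - 1))(i := \<alpha> i - 1 + 1) = \<alpha>" by (auto simp: fun_eq_iff)
    then show ?thesis using True by (simp add: x_pder_def mult_x_def pder_def of_nat_diff)
  qed (simp add: x_pder_def mult_x_def)
  have "Lie sc \<phi> vf_euler h \<alpha> = (\<Sum>i\<in>UNIV. x_pder sc i i h \<alpha> + \<phi> i i (h \<alpha>))"
    unfolding Lie_bm_expand[OF vf_euler_in_bm] by (simp add: vf_euler_def scale_if_1_0)
  also have "\<dots> = sc (of_nat (deg \<alpha>)) (h \<alpha>) + sc c (h \<alpha>)"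
    using assms by (simp add: x_pder_diag sum.distrib Ex_acts_by_def deg_def scale_sum_left)
  finally show "Lie sc \<phi> vf_euler h \<alpha> = sc (of_nat (deg \<alpha>) + c) (h \<alpha>)"
    by (simp add: scale_left_distrib)
qed

lemma mfact_x_pder:
  "sc (mfact \<gamma>) (x_pder sc i j h \<gamma>) =
    (if 1 \<le> \<gamma> i then sc (of_nat (\<gamma> i)) (sc (mfact (exp_move i j \<gamma>)) (h (exp_move i j \<gamma>))) else 0)"
proof (cases "1 \<le> \<gamma> i")
  case True
  then have "x_pder sc i j h \<gamma> = sc (of_nat ((\<gamma>(i := \<gamma> i - 1)) j + 1)) (h (exp_move i j \<gamma>))"
    by (simp add: x_pder_def mult_x_def pder_def exp_move_def)
  then show ?thesis
    using True mfact_exp_move[of \<gamma> i j] by (simp add: mult.commute)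
qed (simp add: x_pder_def mult_x_def)

lemma sum_mfact_monom:
  assumes "deg \<delta> = n" and "\<And>\<gamma>. F \<gamma> 0 = 0"
  shows "(\<Sum>\<gamma>\<in>{\<gamma>. deg \<gamma> = n}. F \<gamma> (sc (mfact \<gamma>) (monom \<delta> (sc (1 / mfact \<delta>) v) \<gamma>))) = F \<delta> v"
proof -
  have "(\<Sum>\<gamma>\<in>{\<gamma>. deg \<gamma> = n}. F \<gamma> (sc (mfact \<gamma>) (monom \<delta> (sc (1 / mfact \<delta>) v) \<gamma>))) =
      (\<Sum>\<gamma>\<in>{\<gamma>. deg \<gamma> = n}. if \<gamma> = \<delta> then F \<delta> v else 0)"
    by (rule sum.cong) (auto simp: monom_def assms(2) mfact_nonzero)
  also have "\<dots> = F \<delta> v"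
    using assms(1) by (simp add: finite_exps_of_deg)
  finally show ?thesis .
qed

lemma vanish_if_pder_closed:
  assumes "\<And>g. g \<in> F \<Longrightarrow> g (\<lambda>_. 0) = 0"
    and "\<And>g k. g \<in> F \<Longrightarrow> pder sc k g \<in> F"
  shows "f \<in> F \<Longrightarrow> f \<beta> = 0"
proof (induction "deg \<beta>" arbitrary: \<beta> f rule: less_induct)
  case less
  show ?case
  proof (cases "\<beta> = (\<lambda>_. 0)")
    case True
    then show ?thesis using assms(1) less.prems by simp
  next
    case False
    then obtain k where "\<beta> k \<noteq> 0" by auto
    define \<beta>' where "\<beta>' = \<beta>(k := \<beta> k - 1)"
    have \<beta>: "\<beta>'(k := Suc (\<beta>' k)) = \<beta>" using \<open>\<beta> k \<noteq> 0\<close> by (auto simp: \<beta>'_def fun_eq_iff)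
    then have "deg \<beta>' < deg \<beta>" using deg_fun_upd_Suc[of \<beta>' k] by simp
    moreover have "pder sc k f \<in> F" using assms(2) less.prems .
    ultimately have "pder sc k f \<beta>' = 0" by (rule less.hyps)
    then have "sc (of_nat (\<beta>' k + 1)) (f \<beta>) = 0"
      by (simp add: pder_def \<beta>)
    moreover have "(of_nat (\<beta>' k + 1) :: complex) \<noteq> 0" by (simp only: of_nat_eq_0_iff)
    ultimately show ?thesis by simp
  qed
qed

end

section \<open>Constant-coefficient differential operators\<close>

text \<open>The operator \<open>\<Sum>\<^sub>\<gamma> \<tau>\<^sub>\<gamma> \<partial>\<^sup>\<gamma>\<close> over \<open>|\<gamma>| = n\<close>, written out on coefficients.\<close>

definition dop :: "(complex \<Rightarrow> 'v::ab_group_add \<Rightarrow> 'v) \<Rightarrow> nat \<Rightarrow> (('m::finite \<Rightarrow> nat) \<Rightarrow> 'v \<Rightarrow> 'w::ab_group_add) \<Rightarrow>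
    (('m \<Rightarrow> nat) \<Rightarrow> 'v) \<Rightarrow> (('m \<Rightarrow> nat) \<Rightarrow> 'w)" where
  "dop scV n \<tau> h = (\<lambda>\<beta>. \<Sum>\<gamma>\<in>{\<gamma>. deg \<gamma> = n}. \<tau> \<gamma> (scV (shift_coeff \<beta> \<gamma>) (h (\<lambda>k. \<beta> k + \<gamma> k))))"

locale cvector_space_pair = V: cvector_space scV + W: cvector_space scW
  for scV :: "complex \<Rightarrow> 'v::ab_group_add \<Rightarrow> 'v" and scW :: "complex \<Rightarrow> 'w::ab_group_add \<Rightarrow> 'w"
begin

text \<open>The \<open>\<partial>\<^sup>\<delta>\<close>-component of \<open>x\<^sub>i \<partial>\<^sub>j\<close> acting on \<open>\<Sum>\<^sub>\<gamma> \<partial>\<^sup>\<gamma> \<otimes> \<tau>\<^sub>\<gamma>\<close>, evaluated at \<open>u\<close>;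
  membership in \<open>InvT\<close> asks for all of these to vanish.\<close>

definition inv_defect :: "nat \<Rightarrow> ('m::finite \<Rightarrow> 'm \<Rightarrow> 'v \<Rightarrow> 'v) \<Rightarrow> ('m \<Rightarrow> 'm \<Rightarrow> 'w \<Rightarrow> 'w) \<Rightarrow>
   (('m \<Rightarrow> nat) \<Rightarrow> 'v \<Rightarrow> 'w) \<Rightarrow> 'm \<Rightarrow> 'm \<Rightarrow> ('m \<Rightarrow> nat) \<Rightarrow> 'v \<Rightarrow> 'w" where
  "inv_defect n \<phi> \<psi> \<tau> i j \<delta> u =
    (\<Sum>\<gamma>\<in>{\<gamma>. deg \<gamma> = n}. scW (dact i j \<gamma> \<delta>) (\<tau> \<gamma> u)) + \<psi> i j (\<tau> \<delta> u) - \<tau> \<delta> (\<phi> i j u)"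

context
  fixes \<tau> :: "('m::finite \<Rightarrow> nat) \<Rightarrow> 'v \<Rightarrow> 'w"
  assumes L: "\<And>\<gamma>. Vector_Spaces.linear scV scW (\<tau> \<gamma>)"
begin

lemma dop_add: "dop scV n \<tau> (\<lambda>\<alpha>. f \<alpha> + g \<alpha>) = (\<lambda>\<beta>. dop scV n \<tau> f \<beta> + dop scV n \<tau> g \<beta>)"
  by (simp add: dop_def V.scale_right_distrib linear_simps[OF L] sum.distrib)

lemma dop_scale: "dop scV n \<tau> (\<lambda>\<alpha>. scV a (f \<alpha>)) = (\<lambda>\<beta>. scW a (dop scV n \<tau> f \<beta>))"
  by (simp add: dop_def linear_simps[OF L] W.scale_sum_right mult.commute)

lemma dop_sum: "dop scV n \<tau> (\<lambda>\<alpha>. \<Sum>x\<in>A. F x \<alpha>) = (\<lambda>\<beta>. \<Sum>x\<in>A. dop scV n \<tau> (F x) \<beta>)"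
  by (simp add: dop_def V.scale_sum_right linear_simps[OF L] sum.swap[of _ A])

lemma dop_at_0: "dop scV n \<tau> h (\<lambda>_. 0) = (\<Sum>\<gamma>\<in>{\<gamma>. deg \<gamma> = n}. \<tau> \<gamma> (scV (mfact \<gamma>) (h \<gamma>)))"
  by (simp add: dop_def)

lemma dop_pder: "dop scV n \<tau> (pder scV k h) = pder scW k (dop scV n \<tau> h)"
proof
  fix \<beta> :: "'m \<Rightarrow> nat"
  have "\<tau> \<gamma> (scV (shift_coeff \<beta> \<gamma>) (pder scV k h (\<lambda>k. \<beta> k + \<gamma> k))) =
      scW (of_nat (\<beta> k + 1)) (\<tau> \<gamma> (scV (shift_coeff (\<beta>(k := \<beta> k + 1)) \<gamma>) (h (\<lambda>ka. (\<beta>(k := \<beta> k + 1)) ka + \<gamma> ka))))" for \<gamma>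
  proof -
    have e: "(\<lambda>ka. (\<beta>(k := \<beta> k + 1)) ka + \<gamma> ka) = (\<lambda>k. \<beta> k + \<gamma> k)(k := \<beta> k + \<gamma> k + 1)"
      by (auto simp: fun_eq_iff)
    have "\<tau> \<gamma> (scV (shift_coeff \<beta> \<gamma>) (pder scV k h (\<lambda>k. \<beta> k + \<gamma> k))) =
        \<tau> \<gamma> (scV (shift_coeff \<beta> \<gamma> * of_nat (\<beta> k + \<gamma> k + 1)) (h ((\<lambda>k. \<beta> k + \<gamma> k)(k := \<beta> k + \<gamma> k + 1))))"
      by (simp only: pder_def V.scale_scale)
    also have "\<dots> = \<tau> \<gamma> (scV (of_nat (\<beta> k + 1) * shift_coeff (\<beta>(k := \<beta> k + 1)) \<gamma>) (h (\<lambda>ka. (\<beta>(k := \<beta> k + 1)) ka + \<gamma> ka)))"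
      by (simp only: shift_coeff_Suc e)
    also have "\<dots> = scW (of_nat (\<beta> k + 1)) (\<tau> \<gamma> (scV (shift_coeff (\<beta>(k := \<beta> k + 1)) \<gamma>) (h (\<lambda>ka. (\<beta>(k := \<beta> k + 1)) ka + \<gamma> ka))))"
      by (simp only: V.scale_scale[symmetric] linear_simps(2)[OF L])
    finally show ?thesis .
  qed
  then show "dop scV n \<tau> (pder scV k h) \<beta> = pder scW k (dop scV n \<tau> h) \<beta>"
    by (simp add: dop_def pder_def W.scale_sum_right)
qed

lemma dact_sum_eq_x_pder:
  assumes "deg \<gamma> = n"
  shows "(\<Sum>\<delta>\<in>{\<delta>. deg \<delta> = n}. scW (dact i j \<gamma> \<delta>) (\<tau> \<gamma> (scV (mfact \<delta>) (h \<delta>)))) =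
    - \<tau> \<gamma> (scV (mfact \<gamma>) (x_pder scV i j h \<gamma>))"
proof (cases "1 \<le> \<gamma> i")
  case True
  define \<delta>\<^sub>0 where "\<delta>\<^sub>0 = exp_move i j \<gamma>"
  have "\<delta>\<^sub>0 \<in> {\<delta>. deg \<delta> = n}"
    using assms deg_exp_move[of \<gamma> i j] True by (simp add: \<delta>\<^sub>0_def)
  have "(\<Sum>\<delta>\<in>{\<delta>. deg \<delta> = n}. scW (dact i j \<gamma> \<delta>) (\<tau> \<gamma> (scV (mfact \<delta>) (h \<delta>)))) =
      (\<Sum>\<delta>\<in>{\<delta>. deg \<delta> = n}. if \<delta> = \<delta>\<^sub>0 then scW (- of_nat (\<gamma> i)) (\<tau> \<gamma> (scV (mfact \<delta>) (h \<delta>))) else 0)"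
    by (rule sum.cong) (simp_all add: dact_eq_exp_move True \<delta>\<^sub>0_def)
  also have "\<dots> = scW (- of_nat (\<gamma> i)) (\<tau> \<gamma> (scV (mfact \<delta>\<^sub>0) (h \<delta>\<^sub>0)))"
    by (simp only: sum.delta[OF finite_exps_of_deg] if_P[OF \<open>\<delta>\<^sub>0 \<in> _\<close>])
  also have "\<dots> = - \<tau> \<gamma> (scV (mfact \<gamma>) (x_pder scV i j h \<gamma>))"
    by (simp add: V.mfact_x_pder True linear_simps[OF L] \<delta>\<^sub>0_def)
  finally show ?thesis .
qed (simp add: dact_eq_exp_move V.mfact_x_pder linear_simps[OF L])

lemma dop_x_pder_at_0:
  assumes LV: "Vector_Spaces.linear scV scV (\<phi> i j)" and LW: "Vector_Spaces.linear scW scW (\<psi> i j)"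
  shows "dop scV n \<tau> (\<lambda>\<alpha>. x_pder scV i j h \<alpha> + \<phi> i j (h \<alpha>)) (\<lambda>_. 0) - \<psi> i j (dop scV n \<tau> h (\<lambda>_. 0)) =
    - (\<Sum>\<delta>\<in>{\<delta>. deg \<delta> = n}. inv_defect n \<phi> \<psi> \<tau> i j \<delta> (scV (mfact \<delta>) (h \<delta>)))"
proof -
  define G where "G = {\<delta>::'m \<Rightarrow> nat. deg \<delta> = n}"
  define u where "u \<delta> = scV (mfact \<delta>) (h \<delta>)" for \<delta>
  have "dop scV n \<tau> (\<lambda>\<alpha>. x_pder scV i j h \<alpha> + \<phi> i j (h \<alpha>)) (\<lambda>_. 0) - \<psi> i j (dop scV n \<tau> h (\<lambda>_. 0)) =
      (\<Sum>\<gamma>\<in>G. \<tau> \<gamma> (scV (mfact \<gamma>) (x_pder scV i j h \<gamma>))) + (\<Sum>\<gamma>\<in>G. \<tau> \<gamma> (\<phi> i j (u \<gamma>)))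
        - (\<Sum>\<gamma>\<in>G. \<psi> i j (\<tau> \<gamma> (u \<gamma>)))"
    by (simp add: dop_at_0 u_def G_def V.scale_right_distrib linear_simps[OF L] linear_simps[OF LV]
        linear_simps[OF LW] sum.distrib)
  also have "(\<Sum>\<gamma>\<in>G. \<tau> \<gamma> (scV (mfact \<gamma>) (x_pder scV i j h \<gamma>))) =
      - (\<Sum>\<delta>\<in>G. \<Sum>\<gamma>\<in>G. scW (dact i j \<gamma> \<delta>) (\<tau> \<gamma> (u \<delta>)))"
  proof -
    have "(\<Sum>\<delta>\<in>G. \<Sum>\<gamma>\<in>G. scW (dact i j \<gamma> \<delta>) (\<tau> \<gamma> (u \<delta>))) =
        (\<Sum>\<gamma>\<in>G. \<Sum>\<delta>\<in>G. scW (dact i j \<gamma> \<delta>) (\<tau> \<gamma> (u \<delta>)))"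
      by (rule sum.swap)
    also have "\<dots> = (\<Sum>\<gamma>\<in>G. - \<tau> \<gamma> (scV (mfact \<gamma>) (x_pder scV i j h \<gamma>)))"
      by (rule sum.cong) (simp_all add: G_def u_def dact_sum_eq_x_pder)
    finally show ?thesis by (simp add: sum_negf)
  qed
  finally show ?thesis
    by (simp add: inv_defect_def G_def[symmetric] u_def[symmetric] sum.distrib sum_subtractf algebra_simps)
qed

lemma dop_Lie_vf_xd:
  assumes LV: "Vector_Spaces.linear scV scV (\<phi> i j)" and LW: "Vector_Spaces.linear scW scW (\<psi> i j)"
    and inv: "\<And>\<delta> u. inv_defect n \<phi> \<psi> \<tau> i j \<delta> u = 0"
  shows "dop scV n \<tau> (Lie scV \<phi> (vf_xd i j) h) = Lie scW \<psi> (vf_xd i j) (dop scV n \<tau> h)"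
proof -
  define D where "D h = (\<lambda>\<alpha>. dop scV n \<tau> (Lie scV \<phi> (vf_xd i j) h) \<alpha> -
      Lie scW \<psi> (vf_xd i j) (dop scV n \<tau> h) \<alpha>)" for h
  have D0: "D h (\<lambda>_. 0) = 0" for h
    using dop_x_pder_at_0[of \<phi> i j \<psi>, OF LV LW, of n h]
    by (simp add: D_def V.Lie_vf_xd W.Lie_vf_xd x_pder_at_0 inv)
  have Dd: "pder scW k (D h) = D (pder scV k h)" for h k
    by (cases "k = i") (simp_all add: D_def W.pder_diff dop_pder[symmetric] dop_add
        V.pder_Lie_vf_xd[of \<phi> i j, OF LV] W.pder_Lie_vf_xd[of \<psi> i j, OF LW])
  have "D h \<beta> = 0" for \<beta>
    by (rule W.vanish_if_pder_closed[where F = "range D"]) (use D0 Dd in auto)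
  then show ?thesis
    by (auto simp: D_def fun_eq_iff)
qed

lemma dop_Lie:
  assumes "\<And>i j. Vector_Spaces.linear scV scV (\<phi> i j)" and "\<And>i j. Vector_Spaces.linear scW scW (\<psi> i j)"
    and "\<And>i j \<delta> u. inv_defect n \<phi> \<psi> \<tau> i j \<delta> u = 0" and "X \<in> bm"
  shows "dop scV n \<tau> (Lie scV \<phi> X h) = Lie scW \<psi> X (dop scV n \<tau> h)"
proof -
  have "dop scV n \<tau> (\<lambda>\<alpha>. x_pder scV i j h \<alpha> + \<phi> i j (h \<alpha>)) =
      (\<lambda>\<alpha>. x_pder scW i j (dop scV n \<tau> h) \<alpha> + \<psi> i j (dop scV n \<tau> h \<alpha>))" for i j
    using dop_Lie_vf_xd[of \<phi> i j \<psi> n h] assms(1-3) by (simp add: V.Lie_vf_xd W.Lie_vf_xd)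
  then show ?thesis
    unfolding V.Lie_bm_expand[OF assms(4)] W.Lie_bm_expand[OF assms(4)]
    by (simp only: dop_add dop_sum dop_scale dop_pder)
qed

lemma polys_dop:
  assumes h: "h \<in> polys"
  shows "dop scV n \<tau> h \<in> polys"
proof -
  define A where "A = {\<alpha>. h \<alpha> \<noteq> 0}"
  have fA: "finite A" using h unfolding A_def polys_iff .
  have "{\<beta>. dop scV n \<tau> h \<beta> \<noteq> 0} \<subseteq> (\<Union>\<alpha>\<in>A. {\<beta>. \<beta> \<le> \<alpha>})"
  proof
    fix \<beta> assume "\<beta> \<in> {\<beta>. dop scV n \<tau> h \<beta> \<noteq> 0}"
    then have "(\<Sum>\<gamma>\<in>{\<gamma>. deg \<gamma> = n}. \<tau> \<gamma> (scV (shift_coeff \<beta> \<gamma>) (h (\<lambda>k. \<beta> k + \<gamma> k)))) \<noteq> 0"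
      unfolding dop_def by simp
    then obtain \<gamma> where g: "\<tau> \<gamma> (scV (shift_coeff \<beta> \<gamma>) (h (\<lambda>k. \<beta> k + \<gamma> k))) \<noteq> 0"
      by (rule sum.not_neutral_contains_not_neutral)
    have "h (\<lambda>k. \<beta> k + \<gamma> k) \<noteq> 0"
    proof
      assume "h (\<lambda>k. \<beta> k + \<gamma> k) = 0"
      with g show False by (simp add: linear_simps(3)[OF L])
    qed
    then have "(\<lambda>k. \<beta> k + \<gamma> k) \<in> A" unfolding A_def by simp
    moreover have "\<beta> \<le> (\<lambda>k. \<beta> k + \<gamma> k)" by (simp add: le_fun_def)
    ultimately show "\<beta> \<in> (\<Union>\<alpha>\<in>A. {\<beta>. \<beta> \<le> \<alpha>})" by blast
  qed
  moreover have "finite (\<Union>\<alpha>\<in>A. {\<beta>. \<beta> \<le> \<alpha>})" using fA finite_exps_le by blast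
  ultimately show ?thesis unfolding polys_iff by (rule finite_subset)
qed

end

end

section \<open>Homomorphisms and their symbols\<close>

text \<open>The factor \<open>1 / \<gamma>!\<close> makes \<open>symbol\<close> inverse to \<open>dop\<close>: at the origin,
  \<open>\<partial>\<^sup>\<gamma>\<close> sends \<open>x\<^sup>\<gamma>\<close> to \<open>\<gamma>!\<close> (see \<open>dop_at_0\<close>).\<close>

definition symbol :: "(complex \<Rightarrow> 'v::ab_group_add \<Rightarrow> 'v) \<Rightarrow> nat \<Rightarrow>
    ((('m::finite \<Rightarrow> nat) \<Rightarrow> 'v) \<Rightarrow> (('m \<Rightarrow> nat) \<Rightarrow> 'w::ab_group_add)) \<Rightarrow> (('m \<Rightarrow> nat) \<Rightarrow> 'v \<Rightarrow> 'w)" where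
  "symbol scV n T = (\<lambda>\<gamma> v. if deg \<gamma> = n then T (monom \<gamma> (scV (1 / mfact \<gamma>) v)) (\<lambda>_. 0) else 0)"

definition dop_hom :: "(complex \<Rightarrow> 'v::ab_group_add \<Rightarrow> 'v) \<Rightarrow> nat \<Rightarrow> (('m::finite \<Rightarrow> nat) \<Rightarrow> 'v \<Rightarrow> 'w::ab_group_add) \<Rightarrow>
    ((('m \<Rightarrow> nat) \<Rightarrow> 'v) \<Rightarrow> (('m \<Rightarrow> nat) \<Rightarrow> 'w))" where
  "dop_hom scV n \<tau> = (\<lambda>h. if h \<in> polys then dop scV n \<tau> h else (\<lambda>_. 0))"

locale lm_rep_pair = cvector_space_pair scV scW
  for scV :: "complex \<Rightarrow> 'v::ab_group_add \<Rightarrow> 'v" and scW :: "complex \<Rightarrow> 'w::ab_group_add \<Rightarrow> 'w" +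
  fixes \<phi> :: "'m::finite \<Rightarrow> 'm \<Rightarrow> 'v \<Rightarrow> 'v" and \<psi> :: "'m \<Rightarrow> 'm \<Rightarrow> 'w \<Rightarrow> 'w" and c c' :: complex
  assumes \<phi>_linear: "\<And>i j. Vector_Spaces.linear scV scV (\<phi> i j)"
    and \<psi>_linear: "\<And>i j. Vector_Spaces.linear scW scW (\<psi> i j)"
    and Ex_V: "Ex_acts_by scV \<phi> c" and Ex_W: "Ex_acts_by scW \<psi> c'"
begin

abbreviation "HB \<equiv> HomB scV \<phi> scW \<psi>"

lemma InvT_iff: "\<tau> \<in> InvT scV \<phi> scW \<psi> n \<longleftrightarrow>
   (\<forall>\<gamma>. Vector_Spaces.linear scV scW (\<tau> \<gamma>)) \<and> (\<forall>\<gamma>. deg \<gamma> \<noteq> n \<longrightarrow> \<tau> \<gamma> = (\<lambda>_. 0)) \<and>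
   (\<forall>i j \<delta> u. inv_defect n \<phi> \<psi> \<tau> i j \<delta> u = 0)"
  by (simp add: InvT_def inv_defect_def)

lemma \<phi>_zero: "\<phi> i j 0 = 0"
  using linear_simps(3)[OF \<phi>_linear] .

lemma \<psi>_zero: "\<psi> i j 0 = 0"
  using linear_simps(3)[OF \<psi>_linear] .

context
  fixes T assumes T: "T \<in> HB"
begin

lemma hb_out: "h \<notin> polys \<Longrightarrow> T h = (\<lambda>_. 0)"
  using T by (simp add: HomB_def)

lemma hb_add: "h \<in> polys \<Longrightarrow> g \<in> polys \<Longrightarrow> T (\<lambda>\<alpha>. h \<alpha> + g \<alpha>) = (\<lambda>\<alpha>. T h \<alpha> + T g \<alpha>)"
  using T by (simp add: HomB_def)

lemma hb_scale: "h \<in> polys \<Longrightarrow> T (\<lambda>\<alpha>. scV a (h \<alpha>)) = (\<lambda>\<alpha>. scW a (T h \<alpha>))"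
  using T by (simp add: HomB_def)

lemma hb_Lie: "X \<in> bm \<Longrightarrow> h \<in> polys \<Longrightarrow> T (Lie scV \<phi> X h) = Lie scW \<psi> X (T h)"
  using T by (simp add: HomB_def)

lemma hb_zero: "T (\<lambda>_. 0) = (\<lambda>_. 0)"
  using hb_scale[of "\<lambda>_. 0" 0] by simp

lemma hb_pder: "h \<in> polys \<Longrightarrow> T (pder scV k h) = pder scW k (T h)"
  using hb_Lie[OF vf_d_in_bm, of h k] by (simp add: V.Lie_vf_d W.Lie_vf_d)

lemma hb_at_0:
  assumes "h \<in> polys"
  shows "T h (\<lambda>_. 0) = (\<Sum>\<gamma>\<in>{\<gamma>. h \<gamma> \<noteq> 0}. T (monom \<gamma> (h \<gamma>)) (\<lambda>_. 0))"
proof -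
  define S where "S = {\<gamma>. h \<gamma> \<noteq> 0}"
  have "finite S" using assms by (simp add: S_def polys_iff)
  have T_sum: "T (\<lambda>\<alpha>. \<Sum>\<gamma>\<in>A. monom \<gamma> (h \<gamma>) \<alpha>) = (\<lambda>\<alpha>. \<Sum>\<gamma>\<in>A. T (monom \<gamma> (h \<gamma>)) \<alpha>)"
    if "finite A" for A
    using that by (induction A rule: finite_induct) (simp_all add: hb_zero hb_add polys_sum)
  have "h = (\<lambda>\<alpha>. \<Sum>\<gamma>\<in>S. monom \<gamma> (h \<gamma>) \<alpha>)"
  proof
    fix \<alpha>
    show "h \<alpha> = (\<Sum>\<gamma>\<in>S. monom \<gamma> (h \<gamma>) \<alpha>)"
      using \<open>finite S\<close> by (simp add: monom_def S_def)
  qed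
  then have "T h = T (\<lambda>\<alpha>. \<Sum>\<gamma>\<in>S. monom \<gamma> (h \<gamma>) \<alpha>)" by (rule arg_cong)
  also have "\<dots> = (\<lambda>\<alpha>. \<Sum>\<gamma>\<in>S. T (monom \<gamma> (h \<gamma>)) \<alpha>)" by (rule T_sum[OF \<open>finite S\<close>])
  finally show ?thesis by (simp add: S_def)
qed

lemma hb_monom_at_0_off_degree:
  assumes "of_nat (deg \<gamma>) + c \<noteq> c'"
  shows "T (monom \<gamma> v) (\<lambda>_. 0) = 0"
proof -
  have "Lie scV \<phi> vf_euler (monom \<gamma> v) = (\<lambda>\<alpha>. scV (of_nat (deg \<gamma>) + c) (monom \<gamma> v \<alpha>))"
  proof
    fix \<alpha>
    show "Lie scV \<phi> vf_euler (monom \<gamma> v) \<alpha> = scV (of_nat (deg \<gamma>) + c) (monom \<gamma> v \<alpha>)"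
      by (cases "\<alpha> = \<gamma>") (simp_all add: V.Lie_vf_euler[OF Ex_V] monom_def)
  qed
  then have "T (Lie scV \<phi> vf_euler (monom \<gamma> v)) = (\<lambda>\<alpha>. scW (of_nat (deg \<gamma>) + c) (T (monom \<gamma> v) \<alpha>))"
    using hb_scale[OF polys_monom] by simp
  moreover have "T (Lie scV \<phi> vf_euler (monom \<gamma> v)) = (\<lambda>\<alpha>. scW (of_nat (deg \<alpha>) + c') (T (monom \<gamma> v) \<alpha>))"
    using hb_Lie[OF vf_euler_in_bm polys_monom] W.Lie_vf_euler[OF Ex_W] by simp
  ultimately have eq: "(\<lambda>\<alpha>. scW (of_nat (deg \<gamma>) + c) (T (monom \<gamma> v) \<alpha>)) =
      (\<lambda>\<alpha>. scW (of_nat (deg \<alpha>) + c') (T (monom \<gamma> v) \<alpha>))"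
    by (rule trans[OF sym])
  have "scW (of_nat (deg \<gamma>) + c) (T (monom \<gamma> v) (\<lambda>_. 0)) = scW c' (T (monom \<gamma> v) (\<lambda>_. 0))"
    using fun_cong[OF eq, of "\<lambda>_. 0"] by simp
  then have "scW (of_nat (deg \<gamma>) + c - c') (T (monom \<gamma> v) (\<lambda>_. 0)) = 0"
    by (simp add: W.scale_left_diff_distrib)
  then show ?thesis using assms by simp
qed

lemma symbol_linear: "Vector_Spaces.linear scV scW (symbol scV n T \<gamma>)"
proof (cases "deg \<gamma> = n")
  case True
  define a where "a = 1 / mfact \<gamma>"
  have symb: "symbol scV n T \<gamma> = (\<lambda>v. T (monom \<gamma> (scV a v)) (\<lambda>_. 0))"
    by (simp add: symbol_def True a_def)
  show ?thesis unfolding symb Vector_Spaces.linear_iff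
  proof (intro conjI allI)
    fix x y
    show "T (monom \<gamma> (scV a (x + y))) (\<lambda>_. 0) = T (monom \<gamma> (scV a x)) (\<lambda>_. 0) + T (monom \<gamma> (scV a y)) (\<lambda>_. 0)"
      by (simp only: V.scale_right_distrib monom_add hb_add[OF polys_monom polys_monom])
  next
    fix b x
    have "monom \<gamma> (scV a (scV b x)) = (\<lambda>\<alpha>. scV b (monom \<gamma> (scV a x) \<alpha>))"
      by (simp only: V.scale_left_commute[of a b] V.monom_scale)
    then show "T (monom \<gamma> (scV a (scV b x))) (\<lambda>_. 0) = scW b (T (monom \<gamma> (scV a x)) (\<lambda>_. 0))"
      by (simp add: hb_scale[OF polys_monom])
  qed (fact V.vs W.vs)+
next
  case False
  then have "symbol scV n T \<gamma> = (\<lambda>v. 0)" by (simp add: symbol_def fun_eq_iff)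
  then show ?thesis by (simp add: Vector_Spaces.linear_iff V.vs W.vs)
qed

lemma hb_at_0_eq_dop_symbol:
  assumes "c' - c = of_nat n" and "h \<in> polys"
  shows "T h (\<lambda>_. 0) = dop scV n (symbol scV n T) h (\<lambda>_. 0)"
proof -
  define F where "F \<gamma> = T (monom \<gamma> (h \<gamma>)) (\<lambda>_. 0)" for \<gamma>
  define S where "S = {\<gamma>. h \<gamma> \<noteq> 0}"
  define G where "G = {\<gamma>::'m \<Rightarrow> nat. deg \<gamma> = n}"
  have "finite (S \<union> G)"
    using assms(2) by (simp add: S_def G_def polys_iff finite_exps_of_deg)
  have "F \<gamma> = 0" if "\<gamma> \<notin> S" for \<gamma>
  proof -
    have "monom \<gamma> (h \<gamma>) = (\<lambda>_. 0)" using that by (simp add: S_def monom_def fun_eq_iff)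
    then show ?thesis by (simp add: F_def hb_zero)
  qed
  moreover have "F \<gamma> = 0" if "\<gamma> \<notin> G" for \<gamma>
    unfolding F_def using that assms(1) by (intro hb_monom_at_0_off_degree) (auto simp: G_def)
  ultimately have "sum F S = sum F G"
    using sum.same_carrier[OF \<open>finite (S \<union> G)\<close>, of S G F F] by blast
  moreover have "T h (\<lambda>_. 0) = sum F S"
    using hb_at_0[OF assms(2)] by (simp add: F_def S_def)
  moreover have "dop scV n (symbol scV n T) h (\<lambda>_. 0) = sum F G"
    unfolding dop_at_0[OF symbol_linear] G_def
    by (rule sum.cong) (simp_all add: symbol_def F_def mfact_nonzero)
  ultimately show ?thesis by simp
qed

lemma hb_eq_dop_symbol:
  assumes "c' - c = of_nat n" and "h \<in> polys"
  shows "T h = dop scV n (symbol scV n T) h"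
proof -
  define D where "D h = (\<lambda>\<alpha>. T h \<alpha> - dop scV n (symbol scV n T) h \<alpha>)" for h
  have "D h \<beta> = 0" for \<beta>
  proof (rule W.vanish_if_pder_closed[where F = "D ` polys"])
    show "g (\<lambda>_. 0) = 0" if "g \<in> D ` polys" for g
      using that hb_at_0_eq_dop_symbol[OF assms(1)] by (auto simp: D_def)
    show "pder scW k g \<in> D ` polys" if "g \<in> D ` polys" for g k
    proof -
      obtain h' where "h' \<in> polys" "g = D h'" using \<open>g \<in> D ` polys\<close> by blast
      then have "pder scW k g = D (pder scV k h')"
        by (simp add: D_def W.pder_diff hb_pder dop_pder[OF symbol_linear])
      then show ?thesis using V.polys_pder[OF \<open>h' \<in> polys\<close>] by blast
    qed
    show "D h \<in> D ` polys" using assms(2) by blast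
  qed
  then show ?thesis by (simp add: D_def fun_eq_iff)
qed

end

lemma inv_defect_zero:
  assumes "\<And>\<gamma>. Vector_Spaces.linear scV scW (\<tau> \<gamma>)"
  shows "inv_defect n \<phi> \<psi> \<tau> i j \<delta> 0 = 0"
  by (simp add: inv_defect_def linear_simps(3)[OF assms] \<phi>_zero \<psi>_zero)

lemma inv_defect_off_degree:
  assumes "\<And>\<gamma>. deg \<gamma> \<noteq> n \<Longrightarrow> \<tau> \<gamma> = (\<lambda>_. 0)" and "deg \<delta> \<noteq> n"
  shows "inv_defect n \<phi> \<psi> \<tau> i j \<delta> v = 0"
proof -
  have "dact i j \<gamma> \<delta> = 0" if "deg \<gamma> = n" for \<gamma>
    using that assms(2) deg_exp_move[of \<gamma> i j] by (auto simp: dact_eq_exp_move)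
  then show ?thesis
    using assms by (simp add: inv_defect_def \<psi>_zero)
qed

lemma symbol_in_InvT:
  assumes T: "T \<in> HB" and n: "c' - c = of_nat n"
  shows "symbol scV n T \<in> InvT scV \<phi> scW \<psi> n"
proof -
  define \<tau> where "\<tau> = symbol scV n T"
  have L: "\<And>\<gamma>. Vector_Spaces.linear scV scW (\<tau> \<gamma>)"
    unfolding \<tau>_def by (rule symbol_linear[OF T])
  have supp: "\<tau> \<gamma> = (\<lambda>_. 0)" if "deg \<gamma> \<noteq> n" for \<gamma>
    using that by (simp add: \<tau>_def symbol_def fun_eq_iff)
  have "inv_defect n \<phi> \<psi> \<tau> i j \<delta> v = 0" for i j \<delta> v
  proof (cases "deg \<delta> = n")
    case True
    define h where "h = monom \<delta> (scV (1 / mfact \<delta>) v)"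
    have "dop scV n \<tau> (\<lambda>\<alpha>. x_pder scV i j h \<alpha> + \<phi> i j (h \<alpha>)) (\<lambda>_. 0) - \<psi> i j (dop scV n \<tau> h (\<lambda>_. 0))
        = T (Lie scV \<phi> (vf_xd i j) h) (\<lambda>_. 0) - \<psi> i j (T h (\<lambda>_. 0))"
      using hb_eq_dop_symbol[OF T n, of h] hb_eq_dop_symbol[OF T n, of "Lie scV \<phi> (vf_xd i j) h"]
        V.polys_Lie[where \<phi> = \<phi>, OF vf_xd_in_bm polys_monom \<phi>_zero] by (simp add: \<tau>_def h_def V.Lie_vf_xd \<phi>_zero)
    also have "\<dots> = 0"
      by (simp add: hb_Lie[OF T vf_xd_in_bm] h_def W.Lie_vf_xd x_pder_at_0)
    finally have "(\<Sum>\<delta>'\<in>{\<delta>. deg \<delta> = n}. inv_defect n \<phi> \<psi> \<tau> i j \<delta>' (scV (mfact \<delta>') (h \<delta>'))) = 0"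
      using dop_x_pder_at_0[where \<phi> = \<phi> and \<psi> = \<psi> and i = i and j = j and n = n and h = h,
          OF L \<phi>_linear \<psi>_linear] by simp
    then show ?thesis
      using V.sum_mfact_monom[OF True, of "inv_defect n \<phi> \<psi> \<tau> i j" v] inv_defect_zero[OF L]
      by (simp add: h_def)
  qed (rule inv_defect_off_degree[OF supp])
  then show ?thesis
    unfolding InvT_iff \<tau>_def[symmetric] using L supp by blast
qed

lemma dop_hom_in_HB:
  assumes "\<tau> \<in> InvT scV \<phi> scW \<psi> n"
  shows "dop_hom scV n \<tau> \<in> HB"
proof -
  have L: "\<And>\<gamma>. Vector_Spaces.linear scV scW (\<tau> \<gamma>)"
    and inv: "\<And>i j \<delta> u. inv_defect n \<phi> \<psi> \<tau> i j \<delta> u = 0"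
    using assms unfolding InvT_iff by blast+
  show ?thesis
    unfolding HomB_def dop_hom_def
    by (simp add: polys_dop[OF L] polys_add dop_add[OF L] V.polys_scale dop_scale[OF L]
        V.polys_Lie \<phi>_zero dop_Lie[OF L \<phi>_linear \<psi>_linear inv])
qed

lemma symbol_dop_hom:
  assumes "\<tau> \<in> InvT scV \<phi> scW \<psi> n"
  shows "symbol scV n (dop_hom scV n \<tau>) = \<tau>"
proof (intro ext)
  fix \<gamma> v
  have L: "\<And>\<gamma>. Vector_Spaces.linear scV scW (\<tau> \<gamma>)"
    and supp: "\<And>\<gamma>. deg \<gamma> \<noteq> n \<Longrightarrow> \<tau> \<gamma> = (\<lambda>_. 0)"
    using assms unfolding InvT_iff by blast+
  show "symbol scV n (dop_hom scV n \<tau>) \<gamma> v = \<tau> \<gamma> v"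
  proof (cases "deg \<gamma> = n")
    case True
    then show ?thesis
      using V.sum_mfact_monom[OF True, of \<tau> v] linear_simps(3)[OF L]
      by (simp add: symbol_def dop_hom_def dop_at_0[OF L])
  qed (simp add: symbol_def supp)
qed

lemma zero_in_HB: "(\<lambda>h \<alpha>. 0) \<in> HB"
proof -
  have "Lie scW \<psi> X (\<lambda>_. 0) = (\<lambda>_. 0)" if "X \<in> bm" for X
    by (simp add: W.Lie_bm_expand[OF that] W.pder_zero x_pder_def mult_x_def \<psi>_zero)
  then show ?thesis by (simp add: HomB_def)
qed

lemma HomB_eq_zero:
  assumes "\<nexists>n::nat. c' - c = of_nat n"
  shows "HB = {\<lambda>h \<alpha>. 0}"
proof -
  have off_degree: "of_nat (deg \<gamma>) + c \<noteq> c'" for \<gamma>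
  proof
    assume "of_nat (deg \<gamma>) + c = c'"
    then have "c' - c = of_nat (deg \<gamma>)" by (simp add: algebra_simps)
    then show False using assms by blast
  qed
  have "T = (\<lambda>h \<alpha>. 0)" if T: "T \<in> HB" for T
  proof -
    have at_0: "T h (\<lambda>_. 0) = 0" if "h \<in> polys" for h
      using hb_at_0[OF T that] hb_monom_at_0_off_degree[OF T off_degree] by simp
    have on_polys: "T h \<beta> = 0" if "h \<in> polys" for h \<beta>
    proof (rule W.vanish_if_pder_closed[where F = "T ` polys"])
      show "g (\<lambda>_. 0) = 0" if "g \<in> T ` polys" for g
        using that at_0 by blast
      show "pder scW k g \<in> T ` polys" if "g \<in> T ` polys" for g k
      proof -
        obtain h' where "h' \<in> polys" "g = T h'" using \<open>g \<in> T ` polys\<close> by blast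
        then have "pder scW k g = T (pder scV k h')" by (simp add: hb_pder[OF T])
        then show ?thesis using V.polys_pder[OF \<open>h' \<in> polys\<close>] by blast
      qed
      show "T h \<in> T ` polys" using that by blast
    qed
    show ?thesis
    proof (intro ext)
      fix h \<alpha>
      show "T h \<alpha> = 0" by (cases "h \<in> polys") (simp_all add: on_polys hb_out[OF T])
    qed
  qed
  then show ?thesis using zero_in_HB by blast
qed

lemma symbol_hom_add: "symbol scV n (hom_add T S) = tau_add (symbol scV n T) (symbol scV n S)"
  by (simp add: symbol_def hom_add_def tau_add_def fun_eq_iff)

lemma symbol_hom_scale: "symbol scV n (hom_scale scW a T) = tau_scale scW a (symbol scV n T)"
  by (simp add: symbol_def hom_scale_def tau_scale_def fun_eq_iff)

lemma bij_betw_symbol: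
  assumes "c' - c = of_nat n"
  shows "bij_betw (symbol scV n) HB (InvT scV \<phi> scW \<psi> n)"
proof (rule bij_betw_byWitness[where f' = "dop_hom scV n"])
  show "\<forall>T\<in>HB. dop_hom scV n (symbol scV n T) = T"
    using hb_eq_dop_symbol[OF _ assms] hb_out by (auto simp: dop_hom_def fun_eq_iff)
qed (use symbol_in_InvT[OF _ assms] symbol_dop_hom dop_hom_in_HB in auto)

end


theorem mainTheorem9:
  fixes scV :: "complex \<Rightarrow> 'v::ab_group_add \<Rightarrow> 'v" and BV :: "'v set"
    and scW :: "complex \<Rightarrow> 'w::ab_group_add \<Rightarrow> 'w" and BW :: "'w set"
    and \<phi> :: "'m::finite \<Rightarrow> 'm \<Rightarrow> 'v \<Rightarrow> 'v" and \<psi> :: "'m \<Rightarrow> 'm \<Rightarrow> 'w \<Rightarrow> 'w"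
    and c c' :: complex
  assumes "finite_dimensional_vector_space scV BV"
    and "finite_dimensional_vector_space scW BW"
    and "is_lm_rep scV \<phi>" and "is_lm_rep scW \<psi>"
    and "Ex_acts_by scV \<phi> c" and "Ex_acts_by scW \<psi> c'"
  shows "((\<nexists>n::nat. c' - c = of_nat n) \<longrightarrow> HomB scV \<phi> scW \<psi> = {\<lambda>h \<alpha>. 0}) \<and>
         (\<forall>n::nat. c' - c = of_nat n \<longrightarrow>
            (\<exists>\<Psi>. bij_betw \<Psi> (HomB scV \<phi> scW \<psi>) (InvT scV \<phi> scW \<psi> n) \<and>
                 (\<forall>T\<in>HomB scV \<phi> scW \<psi>. \<forall>S\<in>HomB scV \<phi> scW \<psi>.
                     \<Psi> (hom_add T S) = tau_add (\<Psi> T) (\<Psi> S)) \<and>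
                 (\<forall>a. \<forall>T\<in>HomB scV \<phi> scW \<psi>.
                     \<Psi> (hom_scale scW a T) = tau_scale scW a (\<Psi> T))))"
proof -
  interpret lm_rep_pair scV scW \<phi> \<psi> c c'
    using assms by (simp add: lm_rep_pair_def lm_rep_pair_axioms_def cvector_space_pair_def
        cvector_space_def finite_dimensional_vector_space_def is_lm_rep_def)
  show ?thesis
    using HomB_eq_zero bij_betw_symbol symbol_hom_add symbol_hom_scale by blast
qed

end
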